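(* Let $(A,C,k)$ be an instance and let $W$ be an exhaustive committee that is $B$-priceable for some budget $B\ge k$. Then the representation ratio of $W$ is at least $\frac12$.
   Context: An instance $(A,C,k)$ consists of a finite nonempty candidate set $C$, voters $N=\{1,\dots,n\}$, approval sets $A_i\subseteq C$, and a committee size $1\le k\le|C|$. $N_c=\{i:c\in A_i\}$. A committee $W\subseteq C$ is exhaustive if $|W|=k$. $\mathrm{cov}(W)=|\{i:A_i\cap W\ne\emptyset\}|$; the representation ratio is $\mathrm{cov}(W)/\max\{\mathrm{cov}(W'):|W'|=k\}$. For $B>0$, $W$ is $B$-priceable if there are $p_i:C\to\mathbb{R}_{\ge0}$ ($i\in N$) with: $p_i(c)=0$ for $c\notin A_i$; $\sum_c p_i(c)\le B/n$ for all $i$; $\sum_i p_i(c)=1$ for $c\in W$; $\sum_i p_i(c)=0$ for $c\notin W$; and $\sum_{i\in N_c}\left(\frac Bn-\sum_{c'\in C}p_i(c')\right)\le1$ for every $c\notin W$. *)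

theory Defs
  imports Main Complex_Main
begin

definition is_instance :: "nat \<Rightarrow> (nat \<Rightarrow> 'c set) \<Rightarrow> 'c set \<Rightarrow> nat \<Rightarrow> bool" where
  "is_instance n A C k \<longleftrightarrow> finite C \<and> C \<noteq> {} \<and> n \<ge> 1 \<and>
     (\<forall>i\<in>{1..n}. A i \<subseteq> C) \<and> 1 \<le> k \<and> k \<le> card C"

definition exhaustive :: "'c set \<Rightarrow> nat \<Rightarrow> 'c set \<Rightarrow> bool" where
  "exhaustive C k W \<longleftrightarrow> W \<subseteq> C \<and> card W = k"

definition cov :: "nat \<Rightarrow> (nat \<Rightarrow> 'c set) \<Rightarrow> 'c set \<Rightarrow> nat" where
  "cov n A W = card {i \<in> {1..n}. A i \<inter> W \<noteq> {}}"

definition max_cov :: "nat \<Rightarrow> (nat \<Rightarrow> 'c set) \<Rightarrow> 'c set \<Rightarrow> nat \<Rightarrow> nat" where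
  "max_cov n A C k = Max ((\<lambda>W'. cov n A W') ` {W'. W' \<subseteq> C \<and> card W' = k})"

definition representation_ratio :: "nat \<Rightarrow> (nat \<Rightarrow> 'c set) \<Rightarrow> 'c set \<Rightarrow> nat \<Rightarrow> 'c set \<Rightarrow> real" where
  "representation_ratio n A C k W = real (cov n A W) / real (max_cov n A C k)"

definition priceable :: "nat \<Rightarrow> (nat \<Rightarrow> 'c set) \<Rightarrow> 'c set \<Rightarrow> real \<Rightarrow> 'c set \<Rightarrow> bool" where
  "priceable n A C B W \<longleftrightarrow> B > 0 \<and>
    (\<exists>p :: nat \<Rightarrow> 'c \<Rightarrow> real.
       (\<forall>i\<in>{1..n}. \<forall>c\<in>C. p i c \<ge> 0) \<and>
       (\<forall>i\<in>{1..n}. \<forall>c\<in>C. c \<notin> A i \<longrightarrow> p i c = 0) \<and>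
       (\<forall>i\<in>{1..n}. (\<Sum>c\<in>C. p i c) \<le> B / real n) \<and>
       (\<forall>c\<in>W. (\<Sum>i\<in>{1..n}. p i c) = 1) \<and>
       (\<forall>c\<in>C - W. (\<Sum>i\<in>{1..n}. p i c) = 0) \<and>
       (\<forall>c\<in>C - W. (\<Sum>i\<in>{i\<in>{1..n}. c \<in> A i}. B / real n - (\<Sum>c'\<in>C. p i c')) \<le> 1))"

end

theory Submission
  imports Defs
begin

text \<open>Let \<open>S\<close> be the voters covered by \<open>W\<close>. A voter outside \<open>S\<close> pays nothing: it
  approves no member of \<open>W\<close>, and candidates outside \<open>W\<close> receive no payment at all. Hence
  the \<open>k\<close> units paid for \<open>W\<close> come from \<open>S\<close>, so \<open>k \<le> |S| B/n\<close>. On the other hand every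
  uncovered voter keeps its whole budget \<open>B/n\<close>, so by the last priceability condition a
  candidate outside \<open>W\<close> is approved by at most \<open>n/B\<close> uncovered voters. A committee of size
  \<open>k\<close> therefore covers at most \<open>|S| + k n/B \<le> 2|S|\<close> voters.\<close>

definition covered :: "nat \<Rightarrow> (nat \<Rightarrow> 'c set) \<Rightarrow> 'c set \<Rightarrow> nat set" where
  "covered n A W = {i \<in> {1..n}. A i \<inter> W \<noteq> {}}"

lemma cov_eq_card_covered: "cov n A W = card (covered n A W)"
  unfolding cov_def covered_def ..

lemma cov_le_cov_plus_uncovered_supporters:
  assumes "finite W'"
  shows "cov n A W' \<le> cov n A W + (\<Sum>c\<in>W' - W. card {i \<in> {1..n} - covered n A W. c \<in> A i})"
proof -
  let ?U = "\<lambda>c. {i \<in> {1..n} - covered n A W. c \<in> A i}"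
  have "covered n A W' \<subseteq> covered n A W \<union> (\<Union>c\<in>W' - W. ?U c)"
    unfolding covered_def by auto
  moreover have "finite (covered n A W \<union> (\<Union>c\<in>W' - W. ?U c))"
    by (rule finite_subset[of _ "{1..n}"]) (auto simp: covered_def)
  ultimately have "cov n A W' \<le> card (covered n A W \<union> (\<Union>c\<in>W' - W. ?U c))"
    unfolding cov_eq_card_covered by (simp add: card_mono)
  also have "\<dots> \<le> cov n A W + card (\<Union>c\<in>W' - W. ?U c)"
    unfolding cov_eq_card_covered by (rule card_Un_le)
  also have "card (\<Union>c\<in>W' - W. ?U c) \<le> (\<Sum>c\<in>W' - W. card (?U c))"
    using assms by (intro card_UN_le) simp
  finally show ?thesis by simp
qed

lemma cov_le_max_cov:
  assumes "finite C" "W \<subseteq> C" "card W = k"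
  shows "cov n A W \<le> max_cov n A C k"
  unfolding max_cov_def using assms by (intro Max_ge) auto

lemma max_cov_attained:
  assumes "finite C" "W \<subseteq> C" "card W = k"
  obtains W' where "W' \<subseteq> C" "card W' = k" "max_cov n A C k = cov n A W'"
proof -
  have "max_cov n A C k \<in> cov n A ` {W'. W' \<subseteq> C \<and> card W' = k}"
    unfolding max_cov_def using assms by (intro Max_in) auto
  then show ?thesis using that by blast
qed

locale price_system =
  fixes n :: nat and A :: "nat \<Rightarrow> 'c set" and C W :: "'c set" and B :: real
    and p :: "nat \<Rightarrow> 'c \<Rightarrow> real"
  assumes finite_C: "finite C"
    and W_subset: "W \<subseteq> C"
    and budget_pos: "B > 0"
    and price_nonneg: "i \<in> {1..n} \<Longrightarrow> c \<in> C \<Longrightarrow> p i c \<ge> 0"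
    and price_approved: "i \<in> {1..n} \<Longrightarrow> c \<in> C \<Longrightarrow> c \<notin> A i \<Longrightarrow> p i c = 0"
    and spent_le_budget: "i \<in> {1..n} \<Longrightarrow> (\<Sum>c\<in>C. p i c) \<le> B / n"
    and paid_elected: "c \<in> W \<Longrightarrow> (\<Sum>i\<in>{1..n}. p i c) = 1"
    and unpaid_unelected: "c \<in> C - W \<Longrightarrow> (\<Sum>i\<in>{1..n}. p i c) = 0"
    and leftover_le_one:
      "c \<in> C - W \<Longrightarrow> (\<Sum>i\<in>{i \<in> {1..n}. c \<in> A i}. B / n - (\<Sum>c'\<in>C. p i c')) \<le> 1"

lemma priceable_imp_price_system:
  assumes "priceable n A C B W" "finite C" "W \<subseteq> C"
  shows "\<exists>p. price_system n A C W B p"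
  using assms unfolding priceable_def price_system_def
  by (elim conjE exE, rename_tac p, rule_tac x = p in exI) auto

context price_system
begin

lemma uncovered_pays_nothing:
  assumes i: "i \<in> {1..n} - covered n A W" and c: "c \<in> C"
  shows "p i c = 0"
proof (cases "c \<in> W")
  case True
  with i have "c \<notin> A i" by (auto simp: covered_def)
  with i c show ?thesis by (auto intro: price_approved)
next
  case False
  with c have "(\<Sum>j\<in>{1..n}. p j c) = 0" by (intro unpaid_unelected) simp
  with i c show ?thesis
    using price_nonneg sum_nonneg_eq_0_iff[of "{1..n}" "\<lambda>j. p j c"] by auto
qed

lemma card_le_cov_budget: "real (card W) \<le> real (cov n A W) * (B / n)"
proof -
  let ?S = "covered n A W"
  have S_sub: "?S \<subseteq> {1..n}" by (auto simp: covered_def)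
  have "real (card W) = (\<Sum>c\<in>W. 1)" by simp
  also have "\<dots> = (\<Sum>c\<in>W. \<Sum>i\<in>{1..n}. p i c)"
    by (intro sum.cong refl paid_elected[symmetric])
  also have "\<dots> = (\<Sum>i\<in>{1..n}. \<Sum>c\<in>W. p i c)" by (rule sum.swap)
  also have "\<dots> = (\<Sum>i\<in>?S. \<Sum>c\<in>W. p i c)"
    using W_subset uncovered_pays_nothing
    by (intro sum.mono_neutral_right S_sub) (auto intro!: sum.neutral)
  also have "\<dots> \<le> (\<Sum>i\<in>?S. \<Sum>c\<in>C. p i c)"
    using S_sub W_subset price_nonneg by (intro sum_mono sum_mono2 finite_C) auto
  also have "\<dots> \<le> (\<Sum>i\<in>?S. B / n)"
    using S_sub spent_le_budget by (intro sum_mono) auto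
  finally show ?thesis by (simp add: cov_eq_card_covered)
qed

lemma cov_pos:
  assumes "W \<noteq> {}"
  shows "cov n A W > 0"
proof (rule ccontr)
  assume "\<not> cov n A W > 0"
  with card_le_cov_budget have "card W = 0" by simp
  with assms W_subset finite_C show False by (simp add: finite_subset)
qed

lemma uncovered_supporters_le:
  assumes c: "c \<in> C - W"
  shows "real (card {i \<in> {1..n} - covered n A W. c \<in> A i}) * (B / n) \<le> 1"
proof -
  let ?U = "{i \<in> {1..n} - covered n A W. c \<in> A i}"
  let ?leftover = "\<lambda>i. B / n - (\<Sum>c'\<in>C. p i c')"
  have "real (card ?U) * (B / n) = (\<Sum>i\<in>?U. ?leftover i)"
    using uncovered_pays_nothing by simp
  also have "\<dots> \<le> (\<Sum>i\<in>{i \<in> {1..n}. c \<in> A i}. ?leftover i)"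
    using spent_le_budget by (intro sum_mono2) auto
  also have "\<dots> \<le> 1" using c by (rule leftover_le_one)
  finally show ?thesis .
qed

lemma cov_le_twice_cov:
  assumes "n > 0" "W' \<subseteq> C" "card W' \<le> card W"
  shows "real (cov n A W') \<le> 2 * real (cov n A W)"
proof -
  let ?U = "\<lambda>c. {i \<in> {1..n} - covered n A W. c \<in> A i}"
  define share where "share = B / n"
  have share_pos: "share > 0" using assms(1) budget_pos by (simp add: share_def)
  have fin: "finite W'" using assms(2) finite_C finite_subset by blast
  have "real (cov n A W') * share \<le> (cov n A W + (\<Sum>c\<in>W' - W. real (card (?U c)))) * share"
    using cov_le_cov_plus_uncovered_supporters[OF fin, of n A W] share_pos
    by (intro mult_right_mono) (simp_all flip: of_nat_sum)
  also have "\<dots> = cov n A W * share + (\<Sum>c\<in>W' - W. real (card (?U c)) * share)"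
    by (simp only: distrib_right sum_distrib_right)
  also have "\<dots> \<le> cov n A W * share + (\<Sum>c\<in>W' - W. 1)"
    using assms(2) uncovered_supporters_le[folded share_def] by (intro add_left_mono sum_mono) auto
  also have "\<dots> \<le> cov n A W * share + card W"
    using assms(3) card_mono[OF fin, of "W' - W"] by auto
  also have "\<dots> \<le> 2 * (cov n A W * share)"
    using card_le_cov_budget[folded share_def] by linarith
  finally show ?thesis using share_pos by simp
qed

end

theorem theorem11:
  fixes n k :: nat and A :: "nat \<Rightarrow> 'c set" and C W :: "'c set" and B :: real
  assumes "is_instance n A C k"
    and "exhaustive C k W"
    and "priceable n A C B W"
    and "B \<ge> real k"
  shows "representation_ratio n A C k W \<ge> 1 / 2"
proof -
  \<comment> \<open>\<open>B \<ge> k\<close> is unused: the \<open>k\<close> units paid for \<open>W\<close> cannot exceed the budget \<open>B\<close>.\<close>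
  have C: "finite C" "n > 0" "k \<ge> 1" using assms(1) by (auto simp: is_instance_def)
  have W: "W \<subseteq> C" "card W = k" using assms(2) by (auto simp: exhaustive_def)
  obtain p where "price_system n A C W B p"
    using priceable_imp_price_system[OF assms(3) C(1) W(1)] by blast
  then interpret price_system n A C W B p .
  obtain W' where W': "W' \<subseteq> C" "card W' = k" "max_cov n A C k = cov n A W'"
    by (rule max_cov_attained[OF C(1) W])
  have "max_cov n A C k \<le> 2 * real (cov n A W)"
    using cov_le_twice_cov C W W' by simp
  moreover have "cov n A W > 0" using cov_pos C W by force
  moreover have "cov n A W \<le> max_cov n A C k" by (rule cov_le_max_cov[OF C(1) W])
  ultimately show ?thesis
    unfolding representation_ratio_def by (simp add: field_simps)
qed

end
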